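(* Let $S_X,S_Y$ be finite nonempty action sets, $\lambda\in[0,1)$, and let $\varphi(s_X,s_Y)=\phi_X(s_X)+\phi_Y(s_Y)$ be additive, with $\phi_X:S_X\to\mathbb{R}$, $\phi_Y:S_Y\to\mathbb{R}$. Then there exists a $(\varphi,\lambda)$-autocratic behavioral strategy for $X$ if and only if $\Phi_X^+\neq\emptyset$, $\Phi_X^-\neq\emptyset$, and either (i) $\phi_X$ is constant, or (ii) $\phi_X$ is non-constant and $\lambda\ge\lambda_{\min}$, where $$\lambda_{\min}=\frac{\max_{s_Y\in S_Y}\phi_Y(s_Y)-\min_{s_Y\in S_Y}\phi_Y(s_Y)}{\max_{s_X\in S_X}\phi_X(s_X)-\min_{s_X\in S_X}\phi_X(s_X)}.$$
   Context: Two players $X,Y$ play a repeated game with finite action sets $S_X,S_Y$; $\Delta(S)$ denotes the probability distributions on $S$. $\varphi$ is extended to mixed actions in its first argument by $\varphi(\tau_X,s_Y)=\mathbb{E}_{s_X\sim\tau_X}[\varphi(s_X,s_Y)]$. Histories: $\mathcal{H}=\bigcup_{T\ge0}(S_X\times S_Y)^T$. A behavioral strategy for $X$ is a map $\sigma_X:\mathcal{H}\to\Delta(S_X)$, similarly for $Y$; players independently draw actions each round from their strategies evaluated at the history of realized action pairs, and $\mathbb{E}_{\sigma_X,\sigma_Y}$ is the expectation over the resulting play. $\sigma_X$ is $(\varphi,\lambda)$-autocratic if for every behavioral strategy $\sigma_Y$ of $Y$, $\mathbb{E}_{\sigma_X,\sigma_Y}\big[(1-\lambda)\sum_{t\ge0}\lambda^t\varphi(s_X^t,s_Y^t)\big]=0$.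 $\Phi_X^+=\{\tau_X\in\Delta(S_X):\min_{s_Y}\varphi(\tau_X,s_Y)\ge0\}$ and $\Phi_X^-=\{\tau_X\in\Delta(S_X):\max_{s_Y}\varphi(\tau_X,s_Y)\le0\}$. *)

theory Defs
  imports "HOL-Probability.Probability"
begin

text \<open>Histories are lists of realized action pairs in chronological order.
  A behavioral strategy maps a history to a mixed action (a pmf).\<close>

type_synonym ('x, 'y) history = "('x \<times> 'y) list"

fun hist_pmf :: "(('x, 'y) history \<Rightarrow> 'x pmf) \<Rightarrow> (('x, 'y) history \<Rightarrow> 'y pmf)
                  \<Rightarrow> nat \<Rightarrow> ('x, 'y) history pmf" where
  "hist_pmf sX sY 0 = return_pmf []"
| "hist_pmf sX sY (Suc T) =
     bind_pmf (hist_pmf sX sY T) (\<lambda>h.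
       bind_pmf (sX h) (\<lambda>a.
         bind_pmf (sY h) (\<lambda>b. return_pmf (h @ [(a, b)]))))"

definition stage_exp :: "('x \<Rightarrow> 'y \<Rightarrow> real) \<Rightarrow> (('x, 'y) history \<Rightarrow> 'x pmf)
                          \<Rightarrow> (('x, 'y) history \<Rightarrow> 'y pmf) \<Rightarrow> nat \<Rightarrow> real" where
  "stage_exp phi sX sY t =
     measure_pmf.expectation (hist_pmf sX sY (Suc t)) (\<lambda>h. phi (fst (last h)) (snd (last h)))"

text \<open>Expected normalized discounted payoff
  E[(1-lam) \<Sum>_t lam^t phi(s_X^t, s_Y^t)]; since phi is bounded and 0 \<le> lam < 1,
  expectation and series commute.\<close>
definition disc_value :: "('x \<Rightarrow> 'y \<Rightarrow> real) \<Rightarrow> real \<Rightarrow> (('x, 'y) history \<Rightarrow> 'x pmf)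
                          \<Rightarrow> (('x, 'y) history \<Rightarrow> 'y pmf) \<Rightarrow> real" where
  "disc_value phi lam sX sY = (1 - lam) * (\<Sum>t. lam ^ t * stage_exp phi sX sY t)"

definition autocratic :: "('x \<Rightarrow> 'y \<Rightarrow> real) \<Rightarrow> real \<Rightarrow> (('x, 'y) history \<Rightarrow> 'x pmf) \<Rightarrow> bool" where
  "autocratic phi lam sX \<longleftrightarrow> (\<forall>sY :: ('x, 'y) history \<Rightarrow> 'y pmf. disc_value phi lam sX sY = 0)"

definition phi_mixed :: "('x \<Rightarrow> 'y \<Rightarrow> real) \<Rightarrow> 'x pmf \<Rightarrow> 'y \<Rightarrow> real" where
  "phi_mixed phi \<tau> y = measure_pmf.expectation \<tau> (\<lambda>x. phi x y)"

definition PhiX_plus :: "('x \<Rightarrow> 'y::finite \<Rightarrow> real) \<Rightarrow> 'x pmf set" where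
  "PhiX_plus phi = {\<tau>. (MIN y. phi_mixed phi \<tau> y) \<ge> 0}"

definition PhiX_minus :: "('x \<Rightarrow> 'y::finite \<Rightarrow> real) \<Rightarrow> 'x pmf set" where
  "PhiX_minus phi = {\<tau>. (MAX y. phi_mixed phi \<tau> y) \<le> 0}"

definition lambda_min :: "('x::finite \<Rightarrow> real) \<Rightarrow> ('y::finite \<Rightarrow> real) \<Rightarrow> real" where
  "lambda_min phiX phiY =
     ((MAX y. phiY y) - (MIN y. phiY y)) / ((MAX x. phiX x) - (MIN x. phiX x))"

end

theory Submission
  imports Defs
begin

text \<open>Against an opponent who always plays \<open>y\<close>, the expected stage payoff is X's mean of
  \<open>phiX\<close> plus \<open>phiY y\<close>; hence an autocratic strategy satisfies
  \<open>(1 - lam) a + lam C + phiY y = 0\<close>, where \<open>a\<close> is X's first-round mean of \<open>phiX\<close> and \<open>C\<close>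
  the discounted mean of X's later-round means, both in \<open>[min phiX, max phiX]\<close>. Letting \<open>y\<close>
  vary gives \<open>min phiX + max phiY \<le> 0 \<le> max phiX + min phiY\<close> and
  \<open>max phiY - min phiY \<le> lam (max phiX - min phiX)\<close>.
  Conversely, X may answer the opponent's last action \<open>y\<close> by a mixed action of mean \<open>g y\<close>
  with \<open>lam g y + phiY y = k\<close> independent of \<open>y\<close>. Then \<open>lam\<close> times X's mean in round \<open>t + 1\<close>
  plus the opponent's mean in round \<open>t\<close> is always \<open>k\<close>, so whatever the opponent does the
  discounted value is \<open>(1 - lam) a + k\<close> for the first-round mean \<open>a\<close>. The inequalities are
  exactly what allows \<open>k\<close> to be chosen with \<open>a = - k / (1 - lam)\<close> and all \<open>g y\<close> in
  \<open>[min phiX, max phiX]\<close>.\<close>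

lemma Max_range_attained: "\<exists>x. f x = (MAX x. f x)"
  for f :: "'a::finite \<Rightarrow> 'b::linorder"
proof -
  have "(MAX x. f x) \<in> range f"
    by (rule Max_in) simp_all
  then show ?thesis
    by (metis rangeE)
qed

lemma Min_range_attained: "\<exists>x. f x = (MIN x. f x)"
  for f :: "'a::finite \<Rightarrow> 'b::linorder"
proof -
  have "(MIN x. f x) \<in> range f"
    by (rule Min_in) simp_all
  then show ?thesis
    by (metis rangeE)
qed

lemma all_diff_le_iff_Max_Min: "(\<forall>y y'. f y - f y' \<le> c) \<longleftrightarrow> (MAX y. f y) - (MIN y. f y) \<le> c"
  for f :: "'a::finite \<Rightarrow> real"
proof
  obtain yM ym where "f yM = (MAX y. f y)" "f ym = (MIN y. f y)"
    using Max_range_attained Min_range_attained by metis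
  moreover assume "\<forall>y y'. f y - f y' \<le> c"
  then have "f yM - f ym \<le> c"
    by blast
  ultimately show "(MAX y. f y) - (MIN y. f y) \<le> c"
    by simp
next
  assume c: "(MAX y. f y) - (MIN y. f y) \<le> c"
  show "\<forall>y y'. f y - f y' \<le> c"
  proof (intro allI)
    fix y y'
    have "f y \<le> (MAX y. f y)" "(MIN y. f y) \<le> f y'"
      by simp_all
    with c show "f y - f y' \<le> c"
      by linarith
  qed
qed

lemma constant_iff_Max_eq_Min: "(\<forall>a b. f a = f b) \<longleftrightarrow> (MAX x. f x) = (MIN x. f x)"
  for f :: "'a::finite \<Rightarrow> 'b::linorder"
proof
  obtain xM xm where "f xM = (MAX x. f x)" "f xm = (MIN x. f x)"
    using Max_range_attained Min_range_attained by metis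
  moreover assume "\<forall>a b. f a = f b"
  then have "f xM = f xm"
    by blast
  ultimately show "(MAX x. f x) = (MIN x. f x)"
    by simp
next
  assume extrema: "(MAX x. f x) = (MIN x. f x)"
  have "f a = (MIN x. f x)" for a
  proof (rule antisym)
    show "f a \<le> (MIN x. f x)"
      using extrema[symmetric] by simp
    show "(MIN x. f x) \<le> f a"
      by simp
  qed
  then show "\<forall>a b. f a = f b"
    by (metis (no_types))
qed

lemma expectation_bind_pmf_finite:
  fixes h :: "'b \<Rightarrow> real"
  assumes "finite (set_pmf p)" "\<And>x. x \<in> set_pmf p \<Longrightarrow> finite (set_pmf (f x))"
  shows "measure_pmf.expectation (bind_pmf p f) h =
         measure_pmf.expectation p (\<lambda>x. measure_pmf.expectation (f x) h)"
  using assms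
  by (subst pmf_expectation_bind[of "set_pmf p"]) (auto simp: integral_measure_pmf[of "set_pmf p"])

lemma expectation_le_const_finite:
  fixes f :: "'a \<Rightarrow> real"
  assumes "finite (set_pmf p)" "\<And>x. x \<in> set_pmf p \<Longrightarrow> f x \<le> c"
  shows "measure_pmf.expectation p f \<le> c"
  using assms
  by (intro measure_pmf.integral_le_const) (auto intro: integrable_measure_pmf_finite simp: AE_measure_pmf_iff)

lemma expectation_ge_const_finite:
  fixes f :: "'a \<Rightarrow> real"
  assumes "finite (set_pmf p)" "\<And>x. x \<in> set_pmf p \<Longrightarrow> c \<le> f x"
  shows "c \<le> measure_pmf.expectation p f"
  using assms
  by (intro measure_pmf.integral_ge_const) (auto intro: integrable_measure_pmf_finite simp: AE_measure_pmf_iff)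

lemma expectation_add_finite:
  fixes f g :: "'a::finite \<Rightarrow> real"
  shows "measure_pmf.expectation p (\<lambda>x. f x + g x) =
         measure_pmf.expectation p f + measure_pmf.expectation p g"
  by (simp add: Bochner_Integration.integral_add integrable_measure_pmf_finite)

lemma exists_pmf_with_expectation:
  fixes f :: "'a \<Rightarrow> real"
  assumes "f lo \<le> v" "v \<le> f hi"
  shows "\<exists>\<tau>. measure_pmf.expectation \<tau> f = v"
proof (cases "f lo = f hi")
  case True
  with assms show ?thesis
    by (intro exI[of _ "return_pmf lo"]) simp
next
  case False
  define q where "q = (v - f lo) / (f hi - f lo)"
  have "f lo < f hi"
    using assms False by linarith
  then have q: "0 \<le> q" "q \<le> 1" "q * (f hi - f lo) = v - f lo"
    using assms by (auto simp: q_def field_simps)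
  let ?\<tau> = "map_pmf (\<lambda>b. if b then hi else lo) (bernoulli_pmf q)"
  have "measure_pmf.expectation ?\<tau> f = q * f hi + (1 - q) * f lo"
    using q by simp
  also have "\<dots> = v"
    using q(3) by (simp add: algebra_simps)
  finally show ?thesis
    by blast
qed

lemma exists_pmf_with_scaled_expectation:
  fixes f :: "'a \<Rightarrow> real"
  assumes "0 \<le> c" "c * f lo \<le> w" "w \<le> c * f hi"
  shows "\<exists>\<tau>. c * measure_pmf.expectation \<tau> f = w"
proof (cases "c = 0")
  case True
  with assms show ?thesis
    by simp
next
  case False
  with assms(1) have "0 < c"
    by simp
  then have "f lo \<le> w / c" "w / c \<le> f hi"
    using divide_right_mono[OF assms(2), of c] divide_right_mono[OF assms(3), of c] by simp_all
  then obtain \<tau> where "measure_pmf.expectation \<tau> f = w / c"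
    using exists_pmf_with_expectation[of f lo "w / c" hi] by blast
  with \<open>0 < c\<close> show ?thesis
    by (intro exI[of _ \<tau>]) simp
qed

subsection \<open>Discounted means\<close>

definition discounted_mean :: "real \<Rightarrow> (nat \<Rightarrow> real) \<Rightarrow> real" where
  "discounted_mean lam A = (1 - lam) * (\<Sum>t. lam ^ t * A t)"

lemma summable_discounted:
  fixes lam :: real
  assumes "\<bar>lam\<bar> < 1" "Bseq A"
  shows "summable (\<lambda>t. lam ^ t * A t)"
proof -
  obtain K where K: "\<And>t. \<bar>A t\<bar> \<le> K"
    using BseqE[OF assms(2)] by (metis real_norm_def)
  show ?thesis
  proof (rule summable_comparison_test)
    show "\<exists>N. \<forall>t\<ge>N. norm (lam ^ t * A t) \<le> \<bar>lam\<bar> ^ t * K"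
      using K by (auto simp: abs_mult power_abs intro!: exI[of _ 0] mult_left_mono)
    show "summable (\<lambda>t. \<bar>lam\<bar> ^ t * K)"
      using assms(1) by (intro summable_mult2 summable_geometric) simp
  qed
qed

lemma discounted_mean_const:
  assumes "\<bar>lam\<bar> < 1"
  shows "discounted_mean lam (\<lambda>_. c) = c"
proof -
  have "lam \<noteq> 1"
    using assms by auto
  then show ?thesis
    using assms by (simp add: discounted_mean_def suminf_mult2[symmetric] suminf_geometric)
qed

lemma discounted_mean_add:
  assumes "\<bar>lam\<bar> < 1" "Bseq A" "Bseq B"
  shows "discounted_mean lam (\<lambda>t. A t + B t) = discounted_mean lam A + discounted_mean lam B"
proof -
  have "(\<Sum>t. lam ^ t * (A t + B t)) = (\<Sum>t. lam ^ t * A t + lam ^ t * B t)"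
    by (simp only: distrib_left)
  also have "\<dots> = (\<Sum>t. lam ^ t * A t) + (\<Sum>t. lam ^ t * B t)"
    using assms by (intro suminf_add[symmetric] summable_discounted)
  finally show ?thesis
    by (simp add: discounted_mean_def distrib_left)
qed

lemma discounted_mean_cmult:
  assumes "\<bar>lam\<bar> < 1" "Bseq A"
  shows "discounted_mean lam (\<lambda>t. c * A t) = c * discounted_mean lam A"
  using suminf_mult[OF summable_discounted[OF assms], of c]
  by (simp add: discounted_mean_def mult.left_commute)

lemma discounted_mean_shift:
  assumes "\<bar>lam\<bar> < 1" "Bseq A"
  shows "discounted_mean lam A = (1 - lam) * A 0 + lam * discounted_mean lam (\<lambda>t. A (Suc t))"
proof -
  have "Bseq (\<lambda>t. A (Suc t))"
    using assms(2) by (simp add: Bseq_Suc_iff)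
  then have "lam * (\<Sum>t. lam ^ t * A (Suc t)) = (\<Sum>t. lam ^ Suc t * A (Suc t))"
    using suminf_mult[OF summable_discounted[OF assms(1)], of _ lam] by (simp add: mult.assoc)
  also have "\<dots> = (\<Sum>t. lam ^ t * A t) - A 0"
    using suminf_split_head[OF summable_discounted[OF assms]] by simp
  finally have "(\<Sum>t. lam ^ t * A t) = A 0 + lam * (\<Sum>t. lam ^ t * A (Suc t))"
    by simp
  then show ?thesis
    by (simp add: discounted_mean_def algebra_simps)
qed

lemma discounted_mean_mono:
  assumes "0 \<le> lam" "lam < 1" "Bseq A" "Bseq B" "\<And>t. A t \<le> B t"
  shows "discounted_mean lam A \<le> discounted_mean lam B"
proof -
  have "\<bar>lam\<bar> < 1"
    using assms(1,2) by simp
  then have "(\<Sum>t. lam ^ t * A t) \<le> (\<Sum>t. lam ^ t * B t)"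
    using assms by (intro suminf_le summable_discounted) (auto intro: mult_left_mono)
  then show ?thesis
    using assms(2) by (simp add: discounted_mean_def)
qed

lemma disc_value_eq_discounted_mean:
  "disc_value phi lam sX sY = discounted_mean lam (stage_exp phi sX sY)"
  by (simp add: disc_value_def discounted_mean_def)

lemma finite_set_hist_pmf:
  fixes sX :: "('x::finite, 'y::finite) history \<Rightarrow> 'x pmf"
  shows "finite (set_pmf (hist_pmf sX sY T))"
  by (induction T) auto

lemma expectation_hist_pmf_Suc:
  fixes sX :: "('x::finite, 'y::finite) history \<Rightarrow> 'x pmf" and F :: "('x, 'y) history \<Rightarrow> real"
  shows "measure_pmf.expectation (hist_pmf sX sY (Suc T)) F =
    measure_pmf.expectation (hist_pmf sX sY T) (\<lambda>h. measure_pmf.expectation (sX h) (\<lambda>a.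
       measure_pmf.expectation (sY h) (\<lambda>b. F (h @ [(a, b)]))))"
  unfolding hist_pmf.simps
  by (subst expectation_bind_pmf_finite; simp add: finite_set_hist_pmf expectation_bind_pmf_finite)+

lemma expectation_hist_pmf_bounds:
  fixes sX :: "('x::finite, 'y::finite) history \<Rightarrow> 'x pmf"
    and \<sigma> :: "('x, 'y) history \<Rightarrow> 'a::finite pmf" and f :: "'a \<Rightarrow> real"
  assumes "\<And>a. m \<le> f a" "\<And>a. f a \<le> M"
  shows "m \<le> measure_pmf.expectation (hist_pmf sX sY t) (\<lambda>h. measure_pmf.expectation (\<sigma> h) f)"
    and "measure_pmf.expectation (hist_pmf sX sY t) (\<lambda>h. measure_pmf.expectation (\<sigma> h) f) \<le> M"
  using assms
  by (auto intro!: expectation_le_const_finite expectation_ge_const_finite finite_set_hist_pmf)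

lemma Bseq_expectation_hist_pmf:
  fixes sX :: "('x::finite, 'y::finite) history \<Rightarrow> 'x pmf"
    and \<sigma> :: "('x, 'y) history \<Rightarrow> 'a::finite pmf" and f :: "'a \<Rightarrow> real"
  shows "Bseq (\<lambda>t. measure_pmf.expectation (hist_pmf sX sY t) (\<lambda>h. measure_pmf.expectation (\<sigma> h) f))"
  by (rule Limits.Bseq_eq_bounded[where a = "MIN a. f a" and b = "MAX a. f a"])
    (auto intro!: expectation_hist_pmf_bounds[where m = "MIN a. f a" and M = "MAX a. f a"])

lemma stage_exp_additive:
  fixes phiX :: "'x::finite \<Rightarrow> real" and phiY :: "'y::finite \<Rightarrow> real"
  shows "stage_exp (\<lambda>x y. phiX x + phiY y) sX sY t =
     measure_pmf.expectation (hist_pmf sX sY t) (\<lambda>h. measure_pmf.expectation (sX h) phiX)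
   + measure_pmf.expectation (hist_pmf sX sY t) (\<lambda>h. measure_pmf.expectation (sY h) phiY)"
  unfolding stage_exp_def expectation_hist_pmf_Suc
  by (simp add: expectation_add_finite integrable_measure_pmf_finite[OF finite_set_hist_pmf])

lemma phi_mixed_additive:
  fixes phiX :: "'x::finite \<Rightarrow> real"
  shows "phi_mixed (\<lambda>x y. phiX x + phiY y) \<tau> y = measure_pmf.expectation \<tau> phiX + phiY y"
  unfolding phi_mixed_def by (simp add: expectation_add_finite)

lemma PhiX_plus_additive_nonempty_iff:
  fixes phiX :: "'x::finite \<Rightarrow> real" and phiY :: "'y::finite \<Rightarrow> real"
  shows "PhiX_plus (\<lambda>x y. phiX x + phiY y) \<noteq> {} \<longleftrightarrow> (\<forall>y. 0 \<le> (MAX x. phiX x) + phiY y)"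
proof
  assume "PhiX_plus (\<lambda>x y. phiX x + phiY y) \<noteq> {}"
  then obtain \<tau> where "\<forall>y. 0 \<le> measure_pmf.expectation \<tau> phiX + phiY y"
    by (auto simp: PhiX_plus_def phi_mixed_additive)
  moreover have "measure_pmf.expectation \<tau> phiX \<le> (MAX x. phiX x)"
    by (rule expectation_le_const_finite) simp_all
  ultimately show "\<forall>y. 0 \<le> (MAX x. phiX x) + phiY y"
    by (meson add_le_cancel_right order_trans)
next
  assume "\<forall>y. 0 \<le> (MAX x. phiX x) + phiY y"
  moreover obtain xM where "phiX xM = (MAX x. phiX x)"
    using Max_range_attained by metis
  ultimately have "return_pmf xM \<in> PhiX_plus (\<lambda>x y. phiX x + phiY y)"
    by (simp add: PhiX_plus_def phi_mixed_additive)
  then show "PhiX_plus (\<lambda>x y. phiX x + phiY y) \<noteq> {}"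
    by blast
qed

lemma PhiX_minus_additive_nonempty_iff:
  fixes phiX :: "'x::finite \<Rightarrow> real" and phiY :: "'y::finite \<Rightarrow> real"
  shows "PhiX_minus (\<lambda>x y. phiX x + phiY y) \<noteq> {} \<longleftrightarrow> (\<forall>y. (MIN x. phiX x) + phiY y \<le> 0)"
proof
  assume "PhiX_minus (\<lambda>x y. phiX x + phiY y) \<noteq> {}"
  then obtain \<tau> where "\<forall>y. measure_pmf.expectation \<tau> phiX + phiY y \<le> 0"
    by (auto simp: PhiX_minus_def phi_mixed_additive)
  moreover have "(MIN x. phiX x) \<le> measure_pmf.expectation \<tau> phiX"
    by (rule expectation_ge_const_finite) simp_all
  ultimately show "\<forall>y. (MIN x. phiX x) + phiY y \<le> 0"
    by (meson add_le_cancel_right order_trans)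
next
  assume "\<forall>y. (MIN x. phiX x) + phiY y \<le> 0"
  moreover obtain xm where "phiX xm = (MIN x. phiX x)"
    using Min_range_attained by metis
  ultimately have "return_pmf xm \<in> PhiX_minus (\<lambda>x y. phiX x + phiY y)"
    by (simp add: PhiX_minus_def phi_mixed_additive)
  then show "PhiX_minus (\<lambda>x y. phiX x + phiY y) \<noteq> {}"
    by blast
qed

lemma lambda_min_condition_iff:
  fixes phiX :: "'x::finite \<Rightarrow> real" and phiY :: "'y::finite \<Rightarrow> real"
  assumes "\<forall>y. (MIN x. phiX x) + phiY y \<le> 0" "\<forall>y. 0 \<le> (MAX x. phiX x) + phiY y"
  shows "((\<forall>a b. phiX a = phiX b) \<or> ((\<exists>a b. phiX a \<noteq> phiX b) \<and> lam \<ge> lambda_min phiX phiY))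
     \<longleftrightarrow> (\<forall>y y'. phiY y - phiY y' \<le> lam * ((MAX x. phiX x) - (MIN x. phiX x)))"
proof -
  \<comment> \<open>The hypotheses matter only for constant \<open>phiX\<close>, where they force \<open>phiY\<close> to be constant.\<close>
  define spanX where "spanX = (MAX x. phiX x) - (MIN x. phiX x)"
  define spanY where "spanY = (MAX y. phiY y) - (MIN y. phiY y)"
  obtain yM ym where "phiY yM = (MAX y. phiY y)" "phiY ym = (MIN y. phiY y)"
    using Max_range_attained Min_range_attained by metis
  with assms(1)[rule_format, of yM] assms(2)[rule_format, of ym] have "spanY \<le> spanX"
    unfolding spanX_def spanY_def by linarith
  have "0 \<le> spanX"
    using order_trans[of "MIN x. phiX x" "phiX undefined" "MAX x. phiX x"] by (simp add: spanX_def)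
  have constant_iff: "(\<forall>a b. phiX a = phiX b) \<longleftrightarrow> spanX = 0"
    unfolding spanX_def constant_iff_Max_eq_Min by simp
  then have nonconstant_iff: "(\<exists>a b. phiX a \<noteq> phiX b) \<longleftrightarrow> spanX \<noteq> 0"
    by blast
  have span_iff: "(\<forall>y y'. phiY y - phiY y' \<le> lam * ((MAX x. phiX x) - (MIN x. phiX x)))
      \<longleftrightarrow> spanY \<le> lam * spanX"
    unfolding spanX_def spanY_def by (rule all_diff_le_iff_Max_Min)
  have "lambda_min phiX phiY = spanY / spanX"
    by (simp add: lambda_min_def spanX_def spanY_def)
  with \<open>spanY \<le> spanX\<close> show ?thesis
    unfolding span_iff constant_iff nonconstant_iff using \<open>0 \<le> spanX\<close> by (auto simp: pos_divide_le_eq)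
qed

subsection \<open>Necessity\<close>

lemma autocratic_additive_balance:
  fixes phiX :: "'x::finite \<Rightarrow> real" and phiY :: "'y::finite \<Rightarrow> real"
  assumes "0 \<le> lam" "lam < 1" "autocratic (\<lambda>x y. phiX x + phiY y) lam sX"
    and "\<And>x. m \<le> phiX x" "\<And>x. phiX x \<le> M"
  shows "\<exists>C. m \<le> C \<and> C \<le> M \<and>
           (1 - lam) * measure_pmf.expectation (sX []) phiX + lam * C + phiY y = 0"
proof -
  have lam: "\<bar>lam\<bar> < 1"
    using assms(1,2) by simp
  define sY :: "('x, 'y) history \<Rightarrow> 'y pmf" where "sY = (\<lambda>_. return_pmf y)"
  define A where
    "A t = measure_pmf.expectation (hist_pmf sX sY t) (\<lambda>h. measure_pmf.expectation (sX h) phiX)" for t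
  define C where "C = discounted_mean lam (\<lambda>t. A (Suc t))"
  have "Bseq A"
    unfolding A_def by (rule Bseq_expectation_hist_pmf)
  then have "Bseq (\<lambda>t. A (Suc t))"
    by (simp add: Bseq_Suc_iff)
  have stage: "stage_exp (\<lambda>x y. phiX x + phiY y) sX sY = (\<lambda>t. A t + phiY y)"
    by (simp add: fun_eq_iff stage_exp_additive A_def sY_def)
  have "0 = disc_value (\<lambda>x y. phiX x + phiY y) lam sX sY"
    using assms(3) by (simp add: autocratic_def)
  also have "\<dots> = discounted_mean lam (\<lambda>t. A t + phiY y)"
    by (simp add: disc_value_eq_discounted_mean stage)
  also have "\<dots> = (1 - lam) * A 0 + lam * C + phiY y"
    using \<open>Bseq A\<close> lam
    by (simp add: discounted_mean_add discounted_mean_const discounted_mean_shift[of lam A] C_def)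
  finally have "(1 - lam) * measure_pmf.expectation (sX []) phiX + lam * C + phiY y = 0"
    by (simp add: A_def)
  moreover have "m \<le> C" "C \<le> M"
  proof -
    have "m \<le> A t" "A t \<le> M" for t
      unfolding A_def using assms(4,5) by (rule expectation_hist_pmf_bounds)+
    then show "m \<le> C" "C \<le> M"
      using discounted_mean_mono[OF assms(1,2) Bfun_const \<open>Bseq (\<lambda>t. A (Suc t))\<close>, of m]
        discounted_mean_mono[OF assms(1,2) \<open>Bseq (\<lambda>t. A (Suc t))\<close> Bfun_const, of M] lam
      by (simp_all add: C_def discounted_mean_const)
  qed
  ultimately show ?thesis
    by blast
qed

lemma autocratic_additive_necessary:
  fixes phiX :: "'x::finite \<Rightarrow> real" and phiY :: "'y::finite \<Rightarrow> real"
  assumes "0 \<le> lam" "lam < 1" "autocratic (\<lambda>x y. phiX x + phiY y) lam sX"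
    and "\<And>x. m \<le> phiX x" "\<And>x. phiX x \<le> M"
  shows "m + phiY y \<le> 0" "0 \<le> M + phiY y" "phiY y - phiY y' \<le> lam * (M - m)"
proof -
  define a where "a = measure_pmf.expectation (sX []) phiX"
  have "m \<le> a" "a \<le> M"
    unfolding a_def using assms(4,5) by (auto intro: expectation_le_const_finite expectation_ge_const_finite)
  then have a_bounds: "(1 - lam) * m \<le> (1 - lam) * a" "(1 - lam) * a \<le> (1 - lam) * M"
    using assms(2) by (simp_all add: mult_left_mono)
  have balance: "\<exists>C. m \<le> C \<and> C \<le> M \<and> (1 - lam) * a + lam * C + phiY z = 0" for z
    unfolding a_def by (rule autocratic_additive_balance[OF assms])
  obtain C where C: "m \<le> C" "C \<le> M" "(1 - lam) * a + lam * C + phiY y = 0"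
    using balance[of y] by blast
  obtain C' where C': "m \<le> C'" "C' \<le> M" "(1 - lam) * a + lam * C' + phiY y' = 0"
    using balance[of y'] by blast
  have "lam * m \<le> lam * C" "lam * C \<le> lam * M" "lam * m \<le> lam * C'" "lam * C' \<le> lam * M"
    using C C' assms(1) by (simp_all add: mult_left_mono)
  with a_bounds C(3) C'(3) show "m + phiY y \<le> 0" "0 \<le> M + phiY y" "phiY y - phiY y' \<le> lam * (M - m)"
    by (simp_all add: algebra_simps)
qed

subsection \<open>Sufficiency\<close>

definition reactive_strategy :: "'x pmf \<Rightarrow> ('y \<Rightarrow> 'x pmf) \<Rightarrow> ('x, 'y) history \<Rightarrow> 'x pmf" where
  "reactive_strategy \<tau>0 \<tau> h = (if h = [] then \<tau>0 else \<tau> (snd (last h)))"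

lemma reactive_strategy_round_balance:
  fixes phiX :: "'x::finite \<Rightarrow> real" and phiY :: "'y::finite \<Rightarrow> real"
  assumes "\<And>y. lam * measure_pmf.expectation (\<tau> y) phiX + phiY y = k"
  shows "lam * measure_pmf.expectation (hist_pmf (reactive_strategy \<tau>0 \<tau>) sY (Suc t))
            (\<lambda>h. measure_pmf.expectation (reactive_strategy \<tau>0 \<tau> h) phiX)
         + measure_pmf.expectation (hist_pmf (reactive_strategy \<tau>0 \<tau>) sY t)
            (\<lambda>h. measure_pmf.expectation (sY h) phiY) = k"
proof -
  let ?E = "measure_pmf.expectation (hist_pmf (reactive_strategy \<tau>0 \<tau>) sY t)"
  have "measure_pmf.expectation (hist_pmf (reactive_strategy \<tau>0 \<tau>) sY (Suc t))
      (\<lambda>h. measure_pmf.expectation (reactive_strategy \<tau>0 \<tau> h) phiX)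
      = ?E (\<lambda>h. measure_pmf.expectation (sY h) (\<lambda>y. measure_pmf.expectation (\<tau> y) phiX))"
    unfolding expectation_hist_pmf_Suc by (simp add: reactive_strategy_def)
  then have "lam * measure_pmf.expectation (hist_pmf (reactive_strategy \<tau>0 \<tau>) sY (Suc t))
      (\<lambda>h. measure_pmf.expectation (reactive_strategy \<tau>0 \<tau> h) phiX) + ?E (\<lambda>h. measure_pmf.expectation (sY h) phiY)
      = ?E (\<lambda>h. lam * measure_pmf.expectation (sY h) (\<lambda>y. measure_pmf.expectation (\<tau> y) phiX)
               + measure_pmf.expectation (sY h) phiY)"
    by (simp add: integrable_measure_pmf_finite[OF finite_set_hist_pmf])
  also have "\<dots> = ?E (\<lambda>h. measure_pmf.expectation (sY h)
      (\<lambda>y. lam * measure_pmf.expectation (\<tau> y) phiX + phiY y))"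
    by (simp add: expectation_add_finite)
  also have "\<dots> = k"
    by (simp add: assms)
  finally show ?thesis .
qed

lemma autocratic_reactive_strategy:
  fixes phiX :: "'x::finite \<Rightarrow> real" and phiY :: "'y::finite \<Rightarrow> real"
  assumes lam: "\<bar>lam\<bar> < 1"
    and response: "\<And>y. lam * measure_pmf.expectation (\<tau> y) phiX + phiY y = k"
    and start: "(1 - lam) * measure_pmf.expectation \<tau>0 phiX + k = 0"
  shows "autocratic (\<lambda>x y. phiX x + phiY y) lam (reactive_strategy \<tau>0 \<tau>)"
  unfolding autocratic_def
proof
  fix sY :: "('x, 'y) history \<Rightarrow> 'y pmf"
  define sX where "sX = reactive_strategy \<tau>0 \<tau>"
  define A where
    "A t = measure_pmf.expectation (hist_pmf sX sY t) (\<lambda>h. measure_pmf.expectation (sX h) phiX)" for t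
  define B where
    "B t = measure_pmf.expectation (hist_pmf sX sY t) (\<lambda>h. measure_pmf.expectation (sY h) phiY)" for t
  have "Bseq A" "Bseq B"
    unfolding A_def B_def by (rule Bseq_expectation_hist_pmf)+
  then have "Bseq (\<lambda>t. A (Suc t))"
    by (simp add: Bseq_Suc_iff)
  then have "Bseq (\<lambda>t. lam * A (Suc t))"
    using Bseq_mult[OF Bfun_const] by blast
  have A0: "A 0 = measure_pmf.expectation \<tau>0 phiX"
    by (simp add: A_def sX_def reactive_strategy_def)
  have step: "lam * A (Suc t) + B t = k" for t
    unfolding A_def B_def sX_def using response by (rule reactive_strategy_round_balance)
  have "stage_exp (\<lambda>x y. phiX x + phiY y) sX sY = (\<lambda>t. A t + B t)"
    by (simp add: fun_eq_iff stage_exp_additive A_def B_def)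
  then have "disc_value (\<lambda>x y. phiX x + phiY y) lam sX sY = discounted_mean lam (\<lambda>t. A t + B t)"
    by (simp add: disc_value_eq_discounted_mean)
  also have "\<dots> = (1 - lam) * A 0 + (lam * discounted_mean lam (\<lambda>t. A (Suc t)) + discounted_mean lam B)"
    using lam \<open>Bseq A\<close> \<open>Bseq B\<close> by (simp add: discounted_mean_add discounted_mean_shift[of lam A])
  also have "\<dots> = (1 - lam) * A 0 + discounted_mean lam (\<lambda>t. lam * A (Suc t) + B t)"
    using lam \<open>Bseq (\<lambda>t. A (Suc t))\<close> \<open>Bseq (\<lambda>t. lam * A (Suc t))\<close> \<open>Bseq B\<close>
    by (simp add: discounted_mean_add discounted_mean_cmult)
  also have "\<dots> = 0"
    using lam start by (simp add: step discounted_mean_const A0)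
  finally show "disc_value (\<lambda>x y. phiX x + phiY y) lam (reactive_strategy \<tau>0 \<tau>) sY = 0"
    by (simp add: sX_def)
qed

lemma exists_autocratic_additive:
  fixes phiX :: "'x::finite \<Rightarrow> real" and phiY :: "'y::finite \<Rightarrow> real"
  assumes "0 \<le> lam" "lam < 1"
    and "\<And>y. phiX xm + phiY y \<le> 0" "\<And>y. 0 \<le> phiX xM + phiY y"
    and "\<And>y y'. phiY y - phiY y' \<le> lam * (phiX xM - phiX xm)"
  shows "\<exists>sX. autocratic (\<lambda>x y. phiX x + phiY y) lam sX"
proof -
  define m where "m = phiX xm"
  define M where "M = phiX xM"
  obtain yM where "phiY yM = (MAX y. phiY y)"
    using Max_range_attained by metis
  then have yM: "phiY y \<le> phiY yM" for y
    by simp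
  have "m \<le> M"
    using assms(3,4)[of yM] unfolding m_def M_def by linarith
  then have "(1 - lam) * m \<le> (1 - lam) * M"
    using assms(2) by (simp add: mult_left_mono)
  txt \<open>The responses need \<open>phiY y + lam m \<le> k \<le> phiY y + lam M\<close> for all \<open>y\<close> and the
    first move needs \<open>- (1 - lam) M \<le> k \<le> - (1 - lam) m\<close>; the hypotheses say exactly that these
    constraints are compatible, and \<open>k\<close> is taken at their common lower end.\<close>
  define k where "k = max (phiY yM + lam * m) (- (1 - lam) * M)"
  have k_bounds: "phiY y + lam * m \<le> k" "k \<le> phiY y + lam * M" for y
    using yM[of y] assms(4)[of y] assms(5)[of yM y] unfolding k_def m_def M_def
    by (auto simp: algebra_simps)
  have "- (1 - lam) * M \<le> k" "k \<le> - (1 - lam) * m"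
    using assms(3)[of yM] \<open>(1 - lam) * m \<le> (1 - lam) * M\<close> unfolding k_def m_def
    by (auto simp: algebra_simps)
  then obtain \<tau>0 where \<tau>0: "measure_pmf.expectation \<tau>0 phiX = - k / (1 - lam)"
    using exists_pmf_with_expectation[of phiX xm "- k / (1 - lam)" xM] assms(2)
    unfolding m_def M_def by (auto simp: field_simps)
  have "\<forall>y. \<exists>\<tau>. lam * measure_pmf.expectation \<tau> phiX = k - phiY y"
  proof
    fix y
    show "\<exists>\<tau>. lam * measure_pmf.expectation \<tau> phiX = k - phiY y"
      using k_bounds[of y] unfolding m_def M_def
      by (intro exists_pmf_with_scaled_expectation[where lo = xm and hi = xM, OF assms(1)]) simp_all
  qed
  then have "\<exists>\<tau>. \<forall>y. lam * measure_pmf.expectation (\<tau> y) phiX = k - phiY y"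
    by (rule choice)
  then obtain \<tau> where "\<forall>y. lam * measure_pmf.expectation (\<tau> y) phiX = k - phiY y"
    by blast
  then have "\<And>y. lam * measure_pmf.expectation (\<tau> y) phiX + phiY y = k"
    by simp
  moreover have "(1 - lam) * measure_pmf.expectation \<tau>0 phiX + k = 0"
    using \<tau>0 assms(2) by simp
  ultimately have "autocratic (\<lambda>x y. phiX x + phiY y) lam (reactive_strategy \<tau>0 \<tau>)"
    using assms(1,2) by (intro autocratic_reactive_strategy) simp_all
  then show ?thesis
    by blast
qed

lemma autocratic_additive_iff:
  fixes phiX :: "'x::finite \<Rightarrow> real" and phiY :: "'y::finite \<Rightarrow> real"
  assumes "0 \<le> lam" "lam < 1"
  shows "(\<exists>sX. autocratic (\<lambda>x y. phiX x + phiY y) lam sX) \<longleftrightarrow>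
    (\<forall>y. (MIN x. phiX x) + phiY y \<le> 0) \<and> (\<forall>y. 0 \<le> (MAX x. phiX x) + phiY y) \<and>
    (\<forall>y y'. phiY y - phiY y' \<le> lam * ((MAX x. phiX x) - (MIN x. phiX x)))"
proof
  assume "\<exists>sX. autocratic (\<lambda>x y. phiX x + phiY y) lam sX"
  then obtain sX where "autocratic (\<lambda>x y. phiX x + phiY y) lam sX"
    by blast
  from autocratic_additive_necessary[OF assms this, of "MIN x. phiX x" "MAX x. phiX x"]
  show "(\<forall>y. (MIN x. phiX x) + phiY y \<le> 0) \<and> (\<forall>y. 0 \<le> (MAX x. phiX x) + phiY y) \<and>
    (\<forall>y y'. phiY y - phiY y' \<le> lam * ((MAX x. phiX x) - (MIN x. phiX x)))"
    by simp
next
  obtain xM xm where "phiX xM = (MAX x. phiX x)" "phiX xm = (MIN x. phiX x)"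
    using Max_range_attained Min_range_attained by metis
  moreover assume "(\<forall>y. (MIN x. phiX x) + phiY y \<le> 0) \<and> (\<forall>y. 0 \<le> (MAX x. phiX x) + phiY y) \<and>
    (\<forall>y y'. phiY y - phiY y' \<le> lam * ((MAX x. phiX x) - (MIN x. phiX x)))"
  ultimately show "\<exists>sX. autocratic (\<lambda>x y. phiX x + phiY y) lam sX"
    by (intro exists_autocratic_additive[OF assms, of phiX xm phiY xM]) simp_all
qed

theorem proposition5:
  fixes phiX :: "'x::finite \<Rightarrow> real" and phiY :: "'y::finite \<Rightarrow> real" and lam :: real
  assumes "0 \<le> lam" and "lam < 1"
  shows "(\<exists>sX. autocratic (\<lambda>x y. phiX x + phiY y) lam sX) \<longleftrightarrow>
           (PhiX_plus (\<lambda>x y. phiX x + phiY y) \<noteq> {} \<and>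
            PhiX_minus (\<lambda>x y. phiX x + phiY y) \<noteq> {} \<and>
            ((\<forall>a b. phiX a = phiX b) \<or>
             ((\<exists>a b. phiX a \<noteq> phiX b) \<and> lam \<ge> lambda_min phiX phiY)))"
  unfolding autocratic_additive_iff[OF assms] PhiX_plus_additive_nonempty_iff
    PhiX_minus_additive_nonempty_iff
  using lambda_min_condition_iff[of phiX phiY lam] by blast

end
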